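(* For every $n>3$, let $G_n$ be the directed graph with nodes $0,\dots,n-1$ and arcs $i\to i+1$ for $0\le i\le n-2$, $j\to 0$ for $1\le j\le n-1$, and $0\to n-1$. Then $G_n$ is strongly connected and $R(G_n)=1/3$.
   Context: $d_G(x,y)$ is the shortest directed path length from $x$ to $y$ ($\infty$ if none). The distance-count matrix $C_G\in\mathbb{R}^{n\times n}$ has $(C_G)_{i,k}=|\{j: d_G(j,i)=k\}|$. For $\mathbf a\in\mathbb{R}^{\mathbb{N}}$ (with $a_0$ arbitrary) the linear centrality is $f^{\mathbf a}_G(i)=\sum_{k=0}^{n-1}(C_G)_{i,k}a_k$. A permutation $\pi$ of $\{0,\dots,n-1\}$ is representable by $G$ if there is $\mathbf a$ with $f^{\mathbf a}_G(\pi(0))>\dots>f^{\mathbf a}_G(\pi(n-1))$. $R(G)=|\{\pi\in S_n:\pi\text{ representable by }G\}|/n!$. *)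

theory Defs
  imports Complex_Main "HOL-Library.Extended_Nat" "HOL-Combinatorics.Permutations"
begin

text \<open>A directed graph on the nodes 0,...,n-1 is given by the number of nodes n and an
arc relation E (only arcs between nodes below n are relevant).\<close>

definition walk :: "nat \<Rightarrow> (nat \<Rightarrow> nat \<Rightarrow> bool) \<Rightarrow> nat \<Rightarrow> nat \<Rightarrow> nat \<Rightarrow> bool" where
  "walk n E x y k \<longleftrightarrow> (\<exists>p::nat \<Rightarrow> nat. p 0 = x \<and> p k = y \<and> (\<forall>i\<le>k. p i < n)
      \<and> (\<forall>i<k. E (p i) (p (Suc i))))"

definition gdist :: "nat \<Rightarrow> (nat \<Rightarrow> nat \<Rightarrow> bool) \<Rightarrow> nat \<Rightarrow> nat \<Rightarrow> enat" where
  "gdist n E x y = (if \<exists>k. walk n E x y k then enat (LEAST k. walk n E x y k) else \<infinity>)"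

definition strongly_connected :: "nat \<Rightarrow> (nat \<Rightarrow> nat \<Rightarrow> bool) \<Rightarrow> bool" where
  "strongly_connected n E \<longleftrightarrow> (\<forall>x<n. \<forall>y<n. gdist n E x y \<noteq> \<infinity>)"

definition dist_count :: "nat \<Rightarrow> (nat \<Rightarrow> nat \<Rightarrow> bool) \<Rightarrow> nat \<Rightarrow> nat \<Rightarrow> nat" where
  "dist_count n E i k = card {j. j < n \<and> gdist n E j i = enat k}"

definition lin_centrality :: "nat \<Rightarrow> (nat \<Rightarrow> nat \<Rightarrow> bool) \<Rightarrow> (nat \<Rightarrow> real) \<Rightarrow> nat \<Rightarrow> real" where
  "lin_centrality n E a i = (\<Sum>k<n. real (dist_count n E i k) * a k)"

definition representable :: "nat \<Rightarrow> (nat \<Rightarrow> nat \<Rightarrow> bool) \<Rightarrow> (nat \<Rightarrow> nat) \<Rightarrow> bool" where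
  "representable n E \<pi> \<longleftrightarrow> (\<exists>a::nat \<Rightarrow> real. \<forall>m. Suc m < n \<longrightarrow>
      lin_centrality n E a (\<pi> m) > lin_centrality n E a (\<pi> (Suc m)))"

definition R_ratio :: "nat \<Rightarrow> (nat \<Rightarrow> nat \<Rightarrow> bool) \<Rightarrow> real" where
  "R_ratio n E = real (card {\<pi>. \<pi> permutes {..<n} \<and> representable n E \<pi>}) / fact n"

definition Gn :: "nat \<Rightarrow> nat \<Rightarrow> nat \<Rightarrow> bool" where
  "Gn n i j \<longleftrightarrow> i < n \<and> j < n \<and>
     ((i \<le> n - 2 \<and> j = i + 1) \<or> (1 \<le> i \<and> j = 0) \<or> (i = 0 \<and> j = n - 1))"

end

theory Submission
  imports Defs
begin

(*
  In G_n every node j reaches 0 in one step, a node i <= n - 2 along the path when j <= i and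
  through 0 in i + 1 steps otherwise, and n - 1 in one step from n - 2 and 0 and in two steps
  from everywhere else. Hence the centralities F(0), ..., F(n - 2) form a triangular system in
  the weights and can be prescribed arbitrarily, whereas (n - 2) F(n - 1) = F(0) + (n - 3) F(1)
  holds for all weights. So a ranking is representable iff n - 1 lies strictly between 0 and 1,
  and by symmetry this is the case for exactly a third of all rankings.
*)

lemma walk_0_iff: "walk n E x y 0 \<longleftrightarrow> x = y \<and> x < n"
  unfolding walk_def by auto

lemma walk_snoc:
  assumes "walk n E x h k" "E h y" "y < n"
  shows "walk n E x y (Suc k)"
proof -
  obtain p where "p 0 = x" "p k = h" "\<forall>i\<le>k. p i < n" "\<forall>i<k. E (p i) (p (Suc i))"
    using assms(1) unfolding walk_def by blast
  then show ?thesis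
    unfolding walk_def using assms(2,3)
    by (intro exI[of _ "p(Suc k := y)"]) (auto simp: le_Suc_eq less_Suc_eq)
qed

lemma walk_SucE:
  assumes "walk n E x y (Suc k)"
  obtains h where "walk n E x h k" "h < n" "E h y"
proof -
  obtain p where "p 0 = x" "p (Suc k) = y" "\<forall>i\<le>Suc k. p i < n"
      "\<forall>i<Suc k. E (p i) (p (Suc i))"
    using assms unfolding walk_def by blast
  then have "walk n E x (p k) k"
    unfolding walk_def by (intro exI[of _ p]) auto
  then show ?thesis
    using that \<open>\<forall>i\<le>Suc k. p i < n\<close> \<open>\<forall>i<Suc k. E (p i) (p (Suc i))\<close>
      \<open>p (Suc k) = y\<close> by auto
qed

lemma walk_length_lower_bound:
  assumes "d x = 0" "\<And>h y. h < n \<Longrightarrow> y < n \<Longrightarrow> E h y \<Longrightarrow> d y \<le> d h + 1"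
    and "walk n E x y k"
  shows "d y \<le> k"
  using assms(3)
proof (induction k arbitrary: y)
  case 0
  then show ?case using assms(1) by (simp add: walk_0_iff)
next
  case (Suc k)
  then obtain h where "walk n E x h k" "h < n" "E h y" by (blast elim: walk_SucE)
  moreover have "y < n" using Suc.prems unfolding walk_def by auto
  ultimately show ?case using Suc.IH assms(2) by fastforce
qed

lemma walk_of_potential:
  assumes "d x = 0" "x < n"
    and "\<And>y. y < n \<Longrightarrow> y \<noteq> x \<Longrightarrow> \<exists>h<n. E h y \<and> d y = d h + 1"
    and "y < n"
  shows "walk n E x y (d y)"
proof -
  have "\<forall>y<n. d y = m \<longrightarrow> walk n E x y m" for m
  proof (induction m)
    case 0
    show ?case
    proof (intro allI impI)
      fix y assume "y < n" "d y = 0"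
      then have "y = x" using assms(3) by fastforce
      then show "walk n E x y 0" using assms(2) by (simp add: walk_0_iff)
    qed
  next
    case (Suc m)
    show ?case
    proof (intro allI impI)
      fix y assume y: "y < n" and "d y = Suc m"
      then have "y \<noteq> x" using assms(1) by auto
      then obtain h where "h < n" "E h y" "d y = d h + 1" using assms(3) y by blast
      then show "walk n E x y (Suc m)"
        using Suc.IH \<open>d y = Suc m\<close> y by (auto intro: walk_snoc)
    qed
  qed
  then show ?thesis using assms(4) by blast
qed

lemma gdist_eq_potential:
  assumes "d x = 0" "x < n"
    and "\<And>h y. h < n \<Longrightarrow> y < n \<Longrightarrow> E h y \<Longrightarrow> d y \<le> d h + 1"
    and "\<And>y. y < n \<Longrightarrow> y \<noteq> x \<Longrightarrow> \<exists>h<n. E h y \<and> d y = d h + 1"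
    and "y < n"
  shows "gdist n E x y = enat (d y)"
  unfolding gdist_def
  using walk_of_potential[of d x n E y] walk_length_lower_bound[of d x n E y] assms
  by (auto intro!: Least_equality)

lemma lin_centrality_eq_sum:
  assumes "\<And>j. j < n \<Longrightarrow> gdist n E j i = enat (d j)" "\<And>j. j < n \<Longrightarrow> d j < n"
  shows "lin_centrality n E a i = (\<Sum>j<n. a (d j))"
proof -
  have "(\<Sum>j<n. a (d j)) = (\<Sum>k<n. \<Sum>j\<in>{j \<in> {..<n}. d j = k}. a (d j))"
    using assms(2) by (intro sum.group[symmetric]) auto
  also have "\<dots> = (\<Sum>k<n. real (card {j. j < n \<and> gdist n E j i = enat k}) * a k)"
    using assms(1) by (intro sum.cong refl) (simp add: conj_commute cong: conj_cong)
  finally show ?thesis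
    unfolding lin_centrality_def dist_count_def by simp
qed

definition Gn_dist :: "nat \<Rightarrow> nat \<Rightarrow> nat \<Rightarrow> nat" where
  "Gn_dist n j i =
     (if i = n - 1 then (if j = n - 1 then 0 else if j = n - 2 \<or> j = 0 then 1 else 2)
      else if j \<le> i then i - j else i + 1)"

lemma gdist_Gn:
  assumes "n > 3" "j < n" "i < n"
  shows "gdist n (Gn n) j i = enat (Gn_dist n j i)"
proof (rule gdist_eq_potential)
  show "Gn_dist n j j = 0" by (simp add: Gn_dist_def)
  show "Gn_dist n j y \<le> Gn_dist n j h + 1" if "h < n" "y < n" "Gn n h y" for h y
    using that assms by (auto simp: Gn_dist_def Gn_def)
  show "\<exists>h<n. Gn n h y \<and> Gn_dist n j y = Gn_dist n j h + 1" if "y < n" "y \<noteq> j" for y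
  proof -
    define h where
      "h = (if y = 0 then j else if y = n - 1 then (if j = n - 2 then j else 0) else y - 1)"
    have "h < n \<and> Gn n h y \<and> Gn_dist n j y = Gn_dist n j h + 1"
      using that assms unfolding h_def by (auto simp: Gn_dist_def Gn_def numeral_2_eq_2)
    then show ?thesis by blast
  qed
qed (use assms in auto)

lemma lin_centrality_Gn:
  assumes "n > 3" "i < n"
  shows "lin_centrality n (Gn n) a i = (\<Sum>j<n. a (Gn_dist n j i))"
  using assms by (intro lin_centrality_eq_sum gdist_Gn) (auto simp: Gn_dist_def)

lemma lin_centrality_Gn_path:
  assumes "n > 3" "i \<le> n - 2"
  shows "lin_centrality n (Gn n) a i = (\<Sum>k\<le>i. a k) + real (n - 1 - i) * a (Suc i)"
proof -
  have "{..<n} = {..i} \<union> {Suc i..<n}" "{..i} \<inter> {Suc i..<n} = {}"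
    using assms by auto
  then have "lin_centrality n (Gn n) a i
      = (\<Sum>j\<le>i. a (Gn_dist n j i)) + (\<Sum>j\<in>{Suc i..<n}. a (Gn_dist n j i))"
    using assms by (simp add: lin_centrality_Gn sum.union_disjoint)
  also have "(\<Sum>j\<le>i. a (Gn_dist n j i)) = (\<Sum>j\<le>i. a (i - j))"
    using assms by (intro sum.cong) (auto simp: Gn_dist_def)
  also have "\<dots> = (\<Sum>k\<le>i. a k)"
    using sum.atLeastAtMost_rev[of "\<lambda>j. a (i - j)" 0 i] by (simp add: atMost_atLeast0)
  also have "(\<Sum>j\<in>{Suc i..<n}. a (Gn_dist n j i)) = (\<Sum>j\<in>{Suc i..<n}. a (Suc i))"
    using assms by (intro sum.cong) (auto simp: Gn_dist_def)
  finally show ?thesis by simp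
qed

lemma lin_centrality_Gn_last:
  assumes "n > 3"
  shows "lin_centrality n (Gn n) a (n - 1) = a 0 + 2 * a 1 + real (n - 3) * a 2"
proof -
  have "{..<n} = {0, n - 2, n - 1} \<union> {1..<n - 2}" "{0, n - 2, n - 1} \<inter> {1..<n - 2} = {}"
    using assms by auto
  then have "lin_centrality n (Gn n) a (n - 1)
      = (\<Sum>j\<in>{0, n - 2, n - 1}. a (Gn_dist n j (n - 1))) + (\<Sum>j\<in>{1..<n - 2}. a (Gn_dist n j (n - 1)))"
    using assms by (simp add: lin_centrality_Gn sum.union_disjoint)
  also have "(\<Sum>j\<in>{0, n - 2, n - 1}. a (Gn_dist n j (n - 1))) = a 0 + 2 * a 1"
  proof -
    have "n - 2 \<noteq> n - 1" "0 \<noteq> n - 2" "0 \<noteq> n - 1" using assms by auto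
    then show ?thesis by (simp add: Gn_dist_def)
  qed
  also have "(\<Sum>j\<in>{1..<n - 2}. a (Gn_dist n j (n - 1))) = (\<Sum>j\<in>{1..<n - 2}. a 2)"
    by (intro sum.cong) (auto simp: Gn_dist_def)
  finally show ?thesis by (simp add: numeral_3_eq_3)
qed

lemma lin_centrality_Gn_last_mean:
  assumes "n > 3"
  shows "real (n - 2) * lin_centrality n (Gn n) a (n - 1)
    = lin_centrality n (Gn n) a 0 + real (n - 3) * lin_centrality n (Gn n) a 1"
proof -
  have F0: "lin_centrality n (Gn n) a 0 = a 0 + real (n - 1) * a 1"
    using lin_centrality_Gn_path[OF assms, of 0] by simp
  have F1: "lin_centrality n (Gn n) a 1 = a 0 + a 1 + real (n - 2) * a 2"
    using lin_centrality_Gn_path[OF assms, of 1] assms by (simp add: numeral_2_eq_2)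
  show ?thesis
    unfolding F0 F1 lin_centrality_Gn_last[OF assms]
    using assms by (simp add: of_nat_diff algebra_simps)
qed

lemma lin_centrality_Gn_Suc:
  assumes "n > 3" "Suc i \<le> n - 2"
  shows "lin_centrality n (Gn n) a (Suc i)
    = lin_centrality n (Gn n) a i + real (n - 2 - i) * (a (Suc (Suc i)) - a (Suc i))"
  using assms by (simp add: lin_centrality_Gn_path of_nat_diff algebra_simps)

text \<open>By lin_centrality_Gn_Suc, prescribing the centralities of 0, ..., n - 2 is a triangular
  system in the weights; this is its solution with weight 0 at distance 1.\<close>

fun Gn_weights :: "nat \<Rightarrow> (nat \<Rightarrow> real) \<Rightarrow> nat \<Rightarrow> real" where
  "Gn_weights n w 0 = w 0"
| "Gn_weights n w (Suc 0) = 0"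
| "Gn_weights n w (Suc (Suc i)) = Gn_weights n w (Suc i) + (w (Suc i) - w i) / real (n - 2 - i)"

lemma lin_centrality_Gn_weights:
  assumes "n > 3" "i \<le> n - 2"
  shows "lin_centrality n (Gn n) (Gn_weights n w) i = w i"
  using assms(2)
proof (induction i)
  case 0
  then show ?case using assms(1) by (simp add: lin_centrality_Gn_path)
next
  case (Suc i)
  then have "real (n - 2 - i) \<noteq> 0" by simp
  then show ?case using Suc by (simp add: lin_centrality_Gn_Suc[OF assms(1)])
qed

definition strictly_between :: "'a::linorder \<Rightarrow> 'a \<Rightarrow> 'a \<Rightarrow> bool" where
  "strictly_between x y z \<longleftrightarrow> x < y \<and> y < z \<or> z < y \<and> y < x"

lemma strictly_between_cases:
  fixes x y z :: "'a::linorder"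
  assumes "x \<noteq> y" "y \<noteq> z" "x \<noteq> z"
  shows "strictly_between x y z \<or> strictly_between y x z \<or> strictly_between x z y"
  using assms unfolding strictly_between_def by (metis linorder_neqE)

lemma strictly_between_weighted_mean:
  fixes x y z s t :: real
  assumes "0 < s" "0 < t" "(s + t) * y = s * x + t * z" "x \<noteq> z"
  shows "strictly_between x y z"
proof -
  have "(s + t) * x < (s + t) * y \<and> (s + t) * y < (s + t) * z
      \<or> (s + t) * z < (s + t) * y \<and> (s + t) * y < (s + t) * x"
    using assms by (cases "x < z") (auto simp: algebra_simps)
  then show ?thesis
    unfolding strictly_between_def using assms(1,2) by (simp add: mult_less_cancel_left_pos)
qed

lemma strictly_between_reflect_strict_antimono_on:
  assumes "strict_antimono_on A g" "x \<in> A" "y \<in> A" "z \<in> A"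
    and "strictly_between (g x) (g y) (g z)"
  shows "strictly_between x y z"
proof -
  have less_iff: "g v < g u \<longleftrightarrow> u < v" if "u \<in> A" "v \<in> A" for u v
    using assms(1) that by (metis linorder_neqE monotone_onD order.asym order.irrefl)
  show ?thesis
    using assms(5) unfolding strictly_between_def less_iff[OF assms(2,3)]
      less_iff[OF assms(3,4)] less_iff[OF assms(3,2)] less_iff[OF assms(4,3)] by blast
qed

lemma strict_antimono_on_lessThan_iff:
  fixes g :: "nat \<Rightarrow> 'a::preorder"
  shows "strict_antimono_on {..<n} g \<longleftrightarrow> (\<forall>m. Suc m < n \<longrightarrow> g (Suc m) < g m)"
proof
  assume step: "\<forall>m. Suc m < n \<longrightarrow> g (Suc m) < g m"
  have "g y < g x" if "x < y" "y < n" for x y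
    using that
  proof (induction y)
    case (Suc y)
    then show ?case
      using step[rule_format, of y] by (cases "x = y") (auto intro: order.strict_trans)
  qed simp
  then show "strict_antimono_on {..<n} g"
    by (auto intro: monotone_onI)
qed (simp add: monotone_on_def)

lemma exists_strict_antimono_weighted_mean:
  fixes s t :: real
  assumes "strictly_between q p r" "0 < s" "0 < t"
  shows "\<exists>V :: nat \<Rightarrow> real. strict_antimono_on UNIV V \<and> (s + t) * V p = s * V q + t * V r"
proof -
  have "\<exists>V :: nat \<Rightarrow> real. strict_antimono_on UNIV V \<and> (s + t) * V p = s * V q + t * V r"
    if "q < p" "p < r" "0 < s" "0 < t" for q p r and s t :: real
  proof -
    define c where "c = s * (real p - real q) / (t * (real r - real p))"
    have "c > 0" using that unfolding c_def by simp
    define V where "V m = (if m \<le> p then - real m else - real p - c * (real m - real p))" for m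
    have "c * (real x - real p) < c * (real y - real p)" if "x < y" for x y
      using \<open>c > 0\<close> that by simp
    moreover have "0 < c * (real y - real p)" if "p < y" for y
      using \<open>c > 0\<close> that by simp
    ultimately have "strict_antimono_on UNIV V"
      by (intro monotone_onI) (fastforce simp: V_def not_le)
    moreover have "(s + t) * V p = s * V q + t * V r"
      using that unfolding V_def c_def by (simp add: field_simps)
    ultimately show ?thesis by blast
  qed
  from this[of q p r s t] this[of r p q t s] show ?thesis
    using assms unfolding strictly_between_def by (auto simp: algebra_simps)
qed

lemma representable_iff_strict_antimono_on:
  "representable n E \<pi> \<longleftrightarrow> (\<exists>a. strict_antimono_on {..<n} (\<lambda>m. lin_centrality n E a (\<pi> m)))"
  unfolding representable_def strict_antimono_on_lessThan_iff by simp

lemma representable_Gn_imp_strictly_between: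
  assumes n: "n > 3" and \<pi>: "\<pi> permutes {..<n}" and "representable n (Gn n) \<pi>"
  shows "strictly_between (inv \<pi> 0) (inv \<pi> (n - 1)) (inv \<pi> 1)"
    (is "strictly_between ?p0 ?pl ?p1")
proof -
  obtain a where mono: "strict_antimono_on {..<n} (\<lambda>m. lin_centrality n (Gn n) a (\<pi> m))"
    using assms(3) unfolding representable_iff_strict_antimono_on by blast
  have "inv \<pi> x < n" "\<pi> (inv \<pi> x) = x" if "x < n" for x
    using that permutes_in_image[OF permutes_inv[OF \<pi>]] permutes_inverses(1)[OF \<pi>] by auto
  then have ranks: "?p0 < n" "?p1 < n" "?pl < n" "\<pi> ?p0 = 0" "\<pi> ?p1 = 1" "\<pi> ?pl = n - 1"
    using n by auto
  have "inj_on (\<lambda>m. lin_centrality n (Gn n) a (\<pi> m)) {..<n}"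
    using mono by (simp add: strict_antimono_iff_antimono)
  moreover have "?p0 \<noteq> ?p1"
    using ranks(4,5) by auto
  ultimately have "lin_centrality n (Gn n) a 0 \<noteq> lin_centrality n (Gn n) a 1"
    using ranks inj_onD by fastforce
  moreover have "real (n - 2) = 1 + real (n - 3)" "real (n - 3) > 0"
    using n by auto
  ultimately have "strictly_between (lin_centrality n (Gn n) a 0)
      (lin_centrality n (Gn n) a (n - 1)) (lin_centrality n (Gn n) a 1)"
    using lin_centrality_Gn_last_mean[OF n, of a]
    by (intro strictly_between_weighted_mean[where s = 1 and t = "real (n - 3)"]) simp_all
  then show ?thesis
    using ranks by (intro strictly_between_reflect_strict_antimono_on[OF mono]) simp_all
qed

lemma strictly_between_imp_representable_Gn:
  assumes n: "n > 3" and \<pi>: "\<pi> permutes {..<n}"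
    and "strictly_between (inv \<pi> 0) (inv \<pi> (n - 1)) (inv \<pi> 1)"
      (is "strictly_between ?p0 ?pl ?p1")
  shows "representable n (Gn n) \<pi>"
proof -
  have weights: "real (n - 2) = 1 + real (n - 3)" "real (n - 3) > 0"
    using n by auto
  obtain V :: "nat \<Rightarrow> real" where mono: "strict_antimono_on UNIV V"
    and mean: "(1 + real (n - 3)) * V ?pl = 1 * V ?p0 + real (n - 3) * V ?p1"
    using exists_strict_antimono_weighted_mean[OF assms(3) zero_less_one weights(2)] by blast
  define a where "a = Gn_weights n (\<lambda>x. V (inv \<pi> x))"
  have "lin_centrality n (Gn n) a (\<pi> m) = V m" if "m < n" for m
  proof (cases "\<pi> m \<le> n - 2")
    case True
    then show ?thesis
      unfolding a_def using lin_centrality_Gn_weights[OF n] permutes_inverses(2)[OF \<pi>] by simp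
  next
    case False
    moreover have "\<pi> m < n"
      using that permutes_in_image[OF \<pi>] by simp
    ultimately have "\<pi> m = n - 1"
      by simp
    then have "m = ?pl"
      using permutes_inverses(2)[OF \<pi>, of m] by simp
    moreover have "lin_centrality n (Gn n) a 0 = V ?p0"
      unfolding a_def by (rule lin_centrality_Gn_weights[OF n]) simp
    moreover have "lin_centrality n (Gn n) a 1 = V ?p1"
      unfolding a_def by (rule lin_centrality_Gn_weights[OF n]) (use n in simp)
    ultimately have "real (n - 2) * lin_centrality n (Gn n) a (\<pi> m) = real (n - 2) * V m"
      using lin_centrality_Gn_last_mean[OF n, of a] mean weights(1) \<open>\<pi> m = n - 1\<close> by simp
    then show ?thesis
      using n by simp
  qed
  then have "strict_antimono_on {..<n} (\<lambda>m. lin_centrality n (Gn n) a (\<pi> m))"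
    using mono by (simp add: monotone_on_def)
  then show ?thesis
    unfolding representable_iff_strict_antimono_on by blast
qed

lemma card_permutes_compose_left:
  assumes "\<tau> permutes S"
  shows "card {\<pi>. \<pi> permutes S \<and> P (\<tau> \<circ> \<pi>)} = card {\<pi>. \<pi> permutes S \<and> P \<pi>}"
proof (rule bij_betw_same_card[of "\<lambda>\<pi>. \<tau> \<circ> \<pi>"], rule bij_betw_byWitness[where f' = "\<lambda>\<pi>. inv \<tau> \<circ> \<pi>"])
  show "\<forall>\<pi>\<in>{\<pi>. \<pi> permutes S \<and> P (\<tau> \<circ> \<pi>)}. inv \<tau> \<circ> (\<tau> \<circ> \<pi>) = \<pi>"
    using permutes_inv_o(2)[OF assms] by (simp add: o_assoc)
  show "\<forall>\<pi>\<in>{\<pi>. \<pi> permutes S \<and> P \<pi>}. \<tau> \<circ> (inv \<tau> \<circ> \<pi>) = \<pi>"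
    using permutes_inv_o(1)[OF assms] by (simp add: o_assoc)
  show "(\<circ>) \<tau> ` {\<pi>. \<pi> permutes S \<and> P (\<tau> \<circ> \<pi>)} \<subseteq> {\<pi>. \<pi> permutes S \<and> P \<pi>}"
    using assms by (auto intro: permutes_compose)
  show "(\<circ>) (inv \<tau>) ` {\<pi>. \<pi> permutes S \<and> P \<pi>} \<subseteq> {\<pi>. \<pi> permutes S \<and> P (\<tau> \<circ> \<pi>)}"
    using assms permutes_inv_o(1)[OF assms]
    by (auto intro: permutes_compose permutes_inv simp: o_assoc)
qed

text \<open>Transpositions show that each of x, y, z is in the middle equally often.\<close>

lemma card_permutes_strictly_between:
  fixes S :: "'a::linorder set"
  assumes "finite S" "x \<in> S" "y \<in> S" "z \<in> S" "x \<noteq> y" "y \<noteq> z" "x \<noteq> z"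
  shows "3 * card {\<pi>. \<pi> permutes S \<and> strictly_between (inv \<pi> x) (inv \<pi> y) (inv \<pi> z)}
    = fact (card S)"
proof -
  define M where
    "M u v w = {\<pi>. \<pi> permutes S \<and> strictly_between (inv \<pi> u) (inv \<pi> v) (inv \<pi> w)}" for u v w
  have relabel: "card (M (\<tau> u) (\<tau> v) (\<tau> w)) = card (M u v w)" if "\<tau> permutes S" for \<tau> u v w
  proof -
    let ?P = "\<lambda>\<pi>. strictly_between (inv \<pi> (\<tau> u)) (inv \<pi> (\<tau> v)) (inv \<pi> (\<tau> w))"
    have "inv (\<tau> \<circ> \<pi>) (\<tau> u) = inv \<pi> u" if "\<pi> permutes S" for \<pi> u
      using \<open>\<tau> permutes S\<close> that
      by (simp add: o_inv_distrib permutes_bij permutes_inverses(2))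
    then have "M u v w = {\<pi>. \<pi> permutes S \<and> ?P (\<tau> \<circ> \<pi>)}"
      unfolding M_def by auto
    then show ?thesis
      using card_permutes_compose_left[OF that, of ?P] by (simp add: M_def)
  qed
  have "card (M y x z) = card (M x y z)"
    using relabel[OF permutes_swap_id[OF assms(2,3)], of x y z] assms(5-7) by simp
  moreover have "card (M x z y) = card (M x y z)"
    using relabel[OF permutes_swap_id[OF assms(3,4)], of x y z] assms(5-7) by simp
  moreover have "{\<pi>. \<pi> permutes S} = M x y z \<union> M y x z \<union> M x z y"
  proof -
    have "inv \<pi> x \<noteq> inv \<pi> y" "inv \<pi> y \<noteq> inv \<pi> z" "inv \<pi> x \<noteq> inv \<pi> z" if "\<pi> permutes S" for \<pi>
      using assms(5-7) permutes_inverses(1)[OF that] by metis+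
    then show ?thesis
      unfolding M_def using strictly_between_cases by blast
  qed
  moreover have "M x y z \<inter> M y x z = {}" "(M x y z \<union> M y x z) \<inter> M x z y = {}"
    unfolding M_def strictly_between_def by auto
  moreover have "finite (M u v w)" for u v w
    unfolding M_def using finite_permutations[OF assms(1)] by (rule rev_finite_subset) auto
  ultimately have "card {\<pi>. \<pi> permutes S} = 3 * card (M x y z)"
    by (simp add: card_Un_disjoint)
  then show ?thesis
    using card_permutations[OF refl assms(1)] unfolding M_def by simp
qed

theorem corollary5:
  fixes n :: nat
  assumes "n > 3"
  shows "strongly_connected n (Gn n) \<and> R_ratio n (Gn n) = 1 / 3"
proof
  show "strongly_connected n (Gn n)"
    unfolding strongly_connected_def using gdist_Gn[OF assms] by simp
  have "{\<pi>. \<pi> permutes {..<n} \<and> representable n (Gn n) \<pi>}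
      = {\<pi>. \<pi> permutes {..<n} \<and> strictly_between (inv \<pi> 0) (inv \<pi> (n - 1)) (inv \<pi> 1)}"
    using representable_Gn_imp_strictly_between strictly_between_imp_representable_Gn assms
    by blast
  moreover have "3 * card \<dots> = fact n"
    using card_permutes_strictly_between[of "{..<n}" 0 "n - 1" 1] assms by simp
  ultimately have "real (3 * card {\<pi>. \<pi> permutes {..<n} \<and> representable n (Gn n) \<pi>}) = fact n"
    by (simp only: of_nat_fact)
  then show "R_ratio n (Gn n) = 1 / 3"
    unfolding R_ratio_def by (simp add: divide_simps)
qed

end
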